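(* Let $X$ be a Polish space and $G$ a closed graph on $X$. Then $P_G$ forces that $\dot K_{gen}$ is a compact $G$-anticlique (a compact subset of $X$ in which no two distinct points are $G$-connected).
   Context: A graph $G$ on $X$ is a symmetric irreflexive relation; it is closed if it is closed in $(X\times X)\setminus$ diagonal. A $G$-anticlique is a set with no two distinct $G$-connected points. The poset $P_G$ consists of all pairs $p=\langle a_p,o_p\rangle$ where $a_p\subset X$ is a finite $G$-anticlique and $o_p\subset X$ is an open set with $a_p\subset o_p$; the order is $q\leq p$ iff $a_p\subset a_q$ and $o_q\subset o_p$. $\dot K_{gen}$ is the $P_G$-name for the closure (in $X$) of the union of the sets $a_p$ for $p$ in the generic filter. *)

theory Defs
  imports "HOL-Analysis.Analysis"
begin

text \<open>The Polish space X is the whole type 'a of class polish_space.\<close>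

definition closed_graph :: "('a::topological_space \<times> 'a) set \<Rightarrow> bool" where
  "closed_graph G \<longleftrightarrow> sym G \<and> G \<inter> Id = {} \<and> closedin (top_of_set (- Id)) G"

definition anticlique :: "('a \<times> 'a) set \<Rightarrow> 'a set \<Rightarrow> bool" where
  "anticlique G A \<longleftrightarrow> (\<forall>x\<in>A. \<forall>y\<in>A. x \<noteq> y \<longrightarrow> (x, y) \<notin> G)"

definition PG :: "('a::topological_space \<times> 'a) set \<Rightarrow> ('a set \<times> 'a set) set" where
  "PG G = {(a, U). finite a \<and> anticlique G a \<and> open U \<and> a \<subseteq> U}"

definition PG_le :: "('a set \<times> 'a set) \<Rightarrow> ('a set \<times> 'a set) \<Rightarrow> bool" where
  "PG_le q p \<longleftrightarrow> fst p \<subseteq> fst q \<and> snd q \<subseteq> snd p"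

definition PG_dense :: "('a::topological_space \<times> 'a) set \<Rightarrow> ('a set \<times> 'a set) set \<Rightarrow> bool" where
  "PG_dense G D \<longleftrightarrow> D \<subseteq> PG G \<and> (\<forall>p\<in>PG G. \<exists>q\<in>D. PG_le q p)"

definition PG_filter :: "('a::topological_space \<times> 'a) set \<Rightarrow> ('a set \<times> 'a set) set \<Rightarrow> bool" where
  "PG_filter G F \<longleftrightarrow> F \<subseteq> PG G \<and> F \<noteq> {}
     \<and> (\<forall>p\<in>F. \<forall>q\<in>PG G. PG_le p q \<longrightarrow> q \<in> F)
     \<and> (\<forall>p\<in>F. \<forall>q\<in>F. \<exists>r\<in>F. PG_le r p \<and> PG_le r q)"

definition K_gen :: "('a::topological_space set \<times> 'a set) set \<Rightarrow> 'a set" where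
  "K_gen F = closure (\<Union>p\<in>F. fst p)"

text \<open>"P_G forces phi(K_gen)" is rendered as: there is a countable family of dense
  subsets of P_G such that every filter meeting all of them satisfies phi.\<close>

definition PG_forces :: "('a::topological_space \<times> 'a) set \<Rightarrow> ('a set \<Rightarrow> bool) \<Rightarrow> bool" where
  "PG_forces G \<phi> \<longleftrightarrow> (\<exists>\<D>. countable \<D> \<and> (\<forall>D\<in>\<D>. PG_dense G D) \<and>
     (\<forall>F. PG_filter G F \<and> (\<forall>D\<in>\<D>. F \<inter> D \<noteq> {}) \<longrightarrow> \<phi> (K_gen F)))"

end

theory Submission
  imports Defs
begin

text \<open>Since G is closed, a finite G-anticlique a is separated by closed balls of any
  sufficiently small radius r: distinct points of a have r-balls whose product misses G.
  Hence the conditions whose open part lies within distance r of such an r-separated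
  anticlique, for some r \<le> e, are dense for each e > 0. A filter meeting these dense sets
  for e = 1/(n+1) has K_gen covered, at arbitrarily small scales r, by finitely many
  r-separated closed r-balls. So K_gen is totally bounded and closed, hence compact; and
  two distinct G-connected points of K_gen lie neither in one such ball (once 2r is below
  their distance) nor in two different ones.\<close>

lemma closed_graph_avoids_box:
  assumes "closed_graph G" "x \<noteq> y" "(x, y) \<notin> G"
  obtains A B where "open A" "open B" "x \<in> A" "y \<in> B" "(A \<times> B) \<inter> G = {}"
proof -
  obtain T where T: "closed T" "G = - Id \<inter> T"
    using assms(1) unfolding closed_graph_def closedin_closed by blast
  then have "open (- T)" "(x, y) \<in> - T"
    using assms(2,3) by auto
  then obtain A B where "open A" "open B" "(x, y) \<in> A \<times> B" "A \<times> B \<subseteq> - T"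
    by (rule open_prod_elim)
  with T show thesis
    by (intro that[of A B]) auto
qed

lemma eventually_cball_subset:
  fixes x :: "'a::metric_space"
  assumes "open A" "x \<in> A"
  shows "\<forall>\<^sub>F r in at_right (0::real). cball x r \<subseteq> A"
proof -
  obtain e where "e > 0" "cball x e \<subseteq> A"
    using assms open_contains_cball by blast
  then show ?thesis
    unfolding eventually_at_right_field
    by (intro exI[of _ e]) (meson less_imp_le order_trans subset_cball)
qed

definition cball_separated :: "('a::metric_space \<times> 'a) set \<Rightarrow> real \<Rightarrow> 'a set \<Rightarrow> bool" where
  "cball_separated G r A \<longleftrightarrow> (\<forall>x\<in>A. \<forall>y\<in>A. x \<noteq> y \<longrightarrow> (cball x r \<times> cball y r) \<inter> G = {})"

lemma eventually_cball_separated: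
  fixes G :: "('a::metric_space \<times> 'a) set"
  assumes "closed_graph G" "finite A" "anticlique G A"
  shows "\<forall>\<^sub>F r in at_right 0. cball_separated G r A"
proof -
  have "\<forall>\<^sub>F r in at_right 0. x \<noteq> y \<longrightarrow> (cball x r \<times> cball y r) \<inter> G = {}"
    if "x \<in> A" "y \<in> A" for x y
  proof (cases "x = y")
    case False
    with that assms(3) have "(x, y) \<notin> G"
      unfolding anticlique_def by auto
    with assms(1) False obtain U V where UV: "open U" "open V" "x \<in> U" "y \<in> V" "(U \<times> V) \<inter> G = {}"
      by (rule closed_graph_avoids_box)
    have "\<forall>\<^sub>F r in at_right 0. cball x r \<subseteq> U \<and> cball y r \<subseteq> V"
      using UV by (intro eventually_conj eventually_cball_subset)
    then show ?thesis
      by (rule eventually_mono) (use UV(5) in auto)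
  qed simp
  then have "\<forall>\<^sub>F r in at_right 0. \<forall>x\<in>A. \<forall>y\<in>A. x \<noteq> y \<longrightarrow> (cball x r \<times> cball y r) \<inter> G = {}"
    using assms(2) by (simp add: eventually_ball_finite_distrib)
  then show ?thesis
    unfolding cball_separated_def .
qed

definition PG_fine :: "('a::metric_space \<times> 'a) set \<Rightarrow> real \<Rightarrow> ('a set \<times> 'a set) set" where
  "PG_fine G e = {q \<in> PG G. \<exists>r\<le>e. cball_separated G r (fst q) \<and> snd q \<subseteq> (\<Union>x\<in>fst q. ball x r)}"

lemma PG_fine_dense:
  fixes G :: "('a::metric_space \<times> 'a) set"
  assumes "closed_graph G" "e > 0"
  shows "PG_dense G (PG_fine G e)"
  unfolding PG_dense_def
proof (intro conjI ballI)
  show "PG_fine G e \<subseteq> PG G"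
    unfolding PG_fine_def by blast
  fix p assume "p \<in> PG G"
  then obtain a U where p: "p = (a, U)" "finite a" "anticlique G a" "open U" "a \<subseteq> U"
    unfolding PG_def by blast
  have "\<forall>\<^sub>F r in at_right 0. cball_separated G r a \<and> 0 < r \<and> r < e"
    using p assms
    by (intro eventually_conj eventually_cball_separated eventually_at_right_less)
       (auto simp: eventually_at_right_field)
  then obtain r where r: "cball_separated G r a" "0 < r" "r < e"
    using eventually_happens' trivial_limit_at_right_real by blast
  define q where "q = (a, U \<inter> (\<Union>x\<in>a. ball x r))"
  have "q \<in> PG_fine G e"
    using p r unfolding q_def PG_fine_def PG_def by (auto intro!: exI[of _ r])
  moreover have "PG_le q p"
    unfolding PG_le_def q_def p by auto
  ultimately show "\<exists>q\<in>PG_fine G e. PG_le q p" by blast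
qed

lemma K_gen_subset_closure:
  assumes "PG_filter G F" "q \<in> F"
  shows "K_gen F \<subseteq> closure (snd q)"
  unfolding K_gen_def
proof (intro closure_mono UN_least)
  fix p assume "p \<in> F"
  have "F \<subseteq> PG G" "\<forall>p\<in>F. \<forall>q\<in>F. \<exists>s\<in>F. PG_le s p \<and> PG_le s q"
    using assms(1) unfolding PG_filter_def by auto
  with \<open>p \<in> F\<close> assms(2) obtain s where "s \<in> PG G" "PG_le s p" "PG_le s q"
    by blast
  then have "fst p \<subseteq> fst s" "fst s \<subseteq> snd s" "snd s \<subseteq> snd q"
    unfolding PG_def PG_le_def by auto
  then show "fst p \<subseteq> snd q"
    by (meson order_trans)
qed

lemma K_gen_fine_cover:
  fixes G :: "('a::metric_space \<times> 'a) set"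
  assumes "PG_filter G F" "q \<in> F" "q \<in> PG_fine G e"
  obtains Q r where "finite Q" "r \<le> e" "cball_separated G r Q" "K_gen F \<subseteq> (\<Union>x\<in>Q. cball x r)"
proof -
  obtain r where r: "r \<le> e" "cball_separated G r (fst q)" "snd q \<subseteq> (\<Union>x\<in>fst q. ball x r)"
    and "finite (fst q)"
    using assms(3) unfolding PG_fine_def PG_def by auto
  moreover have "closure (snd q) \<subseteq> (\<Union>x\<in>fst q. cball x r)"
  proof (rule closure_minimal)
    have "(\<Union>x\<in>fst q. ball x r) \<subseteq> (\<Union>x\<in>fst q. cball x r)"
      by (intro UN_mono ball_subset_cball) auto
    with r(3) show "snd q \<subseteq> (\<Union>x\<in>fst q. cball x r)"
      by (rule order_trans)
    show "closed (\<Union>x\<in>fst q. cball x r)"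
      using \<open>finite (fst q)\<close> by (intro closed_UN) auto
  qed
  ultimately show thesis
    using K_gen_subset_closure[OF assms(1,2)] by (intro that) auto
qed

lemma K_gen_separated_covers:
  fixes G :: "('a::metric_space \<times> 'a) set"
  assumes "PG_filter G F" "\<forall>D\<in>range (\<lambda>n. PG_fine G (1 / Suc n)). F \<inter> D \<noteq> {}" "e > 0"
  shows "\<exists>Q r. finite Q \<and> r \<le> e \<and> cball_separated G r Q \<and> K_gen F \<subseteq> (\<Union>x\<in>Q. cball x r)"
proof -
  obtain n where n: "1 / Suc n < e"
    using \<open>e > 0\<close> by (rule nat_approx_posE)
  from assms(2) obtain q where "q \<in> F" "q \<in> PG_fine G (1 / Suc n)"
    by blast
  with assms(1) obtain Q r where "finite Q" "r \<le> 1 / Suc n" "cball_separated G r Q"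
    "K_gen F \<subseteq> (\<Union>x\<in>Q. cball x r)"
    by (rule K_gen_fine_cover)
  with n show ?thesis
    by (intro exI[of _ Q] exI[of _ r]) auto
qed

lemma compact_if_finite_cball_covers:
  fixes K :: "'a::complete_space set"
  assumes "closed K" "\<And>e. e > 0 \<Longrightarrow> \<exists>Q r. finite Q \<and> r \<le> e \<and> K \<subseteq> (\<Union>x\<in>Q. cball x r)"
  shows "compact K"
  unfolding compact_eq_totally_bounded
proof (intro conjI allI impI)
  show "complete K"
    using assms(1) by (simp add: complete_eq_closed)
  fix e :: real assume "e > 0"
  then obtain Q r where "finite Q" "r \<le> e / 2" "K \<subseteq> (\<Union>x\<in>Q. cball x r)"
    using assms(2)[of "e / 2"] by auto
  moreover have "(\<Union>x\<in>Q. cball x r) \<subseteq> (\<Union>x\<in>Q. ball x e)"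
    using \<open>e > 0\<close> \<open>r \<le> e / 2\<close> by (intro UN_mono) auto
  ultimately show "\<exists>Q. finite Q \<and> K \<subseteq> (\<Union>x\<in>Q. ball x e)"
    by (meson order_trans)
qed

lemma anticlique_if_separated_covers:
  fixes K :: "'a::metric_space set"
  assumes "\<And>e. e > 0 \<Longrightarrow> \<exists>Q r. r \<le> e \<and> cball_separated G r Q \<and> K \<subseteq> (\<Union>x\<in>Q. cball x r)"
  shows "anticlique G K"
  unfolding anticlique_def
proof (intro ballI impI notI)
  fix x y assume xy: "x \<in> K" "y \<in> K" "x \<noteq> y" "(x, y) \<in> G"
  then have "dist x y / 3 > 0"
    by simp
  then obtain Q r where Q: "r \<le> dist x y / 3" "cball_separated G r Q" "K \<subseteq> (\<Union>x\<in>Q. cball x r)"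
    using assms by blast
  then obtain a b where ab: "a \<in> Q" "b \<in> Q" "x \<in> cball a r" "y \<in> cball b r"
    using xy(1,2) by blast
  show False
  proof (cases "a = b")
    case True
    have "dist x y \<le> dist a x + dist a y"
      by (rule dist_triangle3)
    moreover have "dist a x \<le> r" "dist a y \<le> r"
      using ab True by auto
    ultimately show False
      using Q(1) \<open>dist x y / 3 > 0\<close> by linarith
  next
    case False
    with ab Q(2) xy(4) show False
      unfolding cball_separated_def by blast
  qed
qed

theorem proposition2p2:
  fixes G :: "('a::polish_space \<times> 'a) set"
  assumes "closed_graph G"
  shows "PG_forces G (\<lambda>K. compact K \<and> anticlique G K)"
  unfolding PG_forces_def
proof (intro exI[of _ "range (\<lambda>n. PG_fine G (1 / Suc n))"] conjI ballI allI impI)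
  show "countable (range (\<lambda>n. PG_fine G (1 / Suc n)))" by simp
  show "PG_dense G D" if "D \<in> range (\<lambda>n. PG_fine G (1 / Suc n))" for D
    using that PG_fine_dense[OF assms] by auto
  fix F assume F: "PG_filter G F \<and> (\<forall>D\<in>range (\<lambda>n. PG_fine G (1 / Suc n)). F \<inter> D \<noteq> {})"
  note covers = K_gen_separated_covers[OF conjunct1[OF F] conjunct2[OF F]]
  show "compact (K_gen F)"
  proof (rule compact_if_finite_cball_covers)
    show "closed (K_gen F)"
      unfolding K_gen_def by simp
  qed (use covers in meson)
  show "anticlique G (K_gen F)"
    by (rule anticlique_if_separated_covers) (use covers in meson)
qed

end
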